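(* Let $b$ be measurable with $\mathbf b:=\sup_{x,\eta}b(x,\eta)<\infty$ and $\sup_{\eta\in\Gamma_G}|b(x,\eta\cup\{y\})-b(x,\eta)|\le MG(x-y)$ for some $M>0$ and all $x,y$, and let $(\eta_t)_{t\ge0}$ be the unique solution of ( * ). Suppose there is $C_0>0$ with $\mathbb E|\eta_0\cap B|\le C_0\,\mathrm{vol}(B)$ for all bounded Borel $B\subset\mathbb R^d$. Then there exists $C>0$ (one may take $C=\max\{\mathbf b,C_0\}$) such that $\mathbb E|\eta_t\cap B|\le C\,\mathrm{vol}(B)$ for all $t>0$ and all bounded Borel $B$.
   Context: Fix $d\in\mathbb N$ and $\varepsilon>0$, and let $G(x)=(1+|x|)^{-d-\varepsilon}$, $x\in\mathbb R^d$. $\Gamma$ is the set of locally finite subsets $\gamma\subset\mathbb R^d$ (i.e. $|\gamma\cap B|<\infty$ for each bounded Borel $B$), identified with counting measures; $\Gamma_G=\{\gamma\in\Gamma:\langle G,\gamma\rangle:=\sum_{x\in\gamma}G(x)<\infty\}$, equipped with the sequential topology in which $\gamma_n\to\gamma$ iff $\langle f,\gamma_n\rangle\to\langle f,\gamma\rangle$ for all bounded continuous $f$ with $|f|\le M_fG$ for some $M_f$, and the corresponding Borel $\sigma$-algebra. For a measurable $b:\mathbb R^d\times\Gamma_G\to[0,\infty)$, a process with unit death rate and birth rate $b$ is defined as follows. Let $\tilde N$ be a Poisson point process on $\mathbb R_+\times\mathbb R^d\times\mathbb R_+^2$ with mean measure $ds\,dx\,du\,e^{-r}dr$; $\tilde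 N$ is compatible with a filtration $(\mathcal F_t)$ if for every measurable $A\subset\mathbb R^d\times\mathbb R_+^2$, $\tilde N([0,t]\times A)$ is $\mathcal F_t$-measurable and $\tilde N((t,s]\times A)$ is independent of $\mathcal F_t$ for $0<t<s$. Let $\eta_0$ be a $\Gamma_G$-valued $\mathcal F_0$-measurable random variable independent of $\tilde N$, and let $\tilde\eta_0$ be the point process on $\mathbb R^d\times\mathbb R_+$ obtained by attaching to each point of $\eta_0$ an independent unit exponential random variable (independent of $\eta_0$ and $\tilde N$). A solution is a process $(\eta_t)_{t\ge0}$ with sample paths in the Skorokhod space $D_{\Gamma_G}[0,\infty)$, adapted to a filtration with which $\tilde N$ is compatible, such that for every bounded Borel $B\subset\mathbb R^d$ and $t\ge0$, almost surely $$( * )\quad \eta_t(B)=\int_{(0,t]\times B\times\mathbb R_+^2}\mathbf 1_{[0,b(x,\eta_{s-})]}(u)\,\mathbf 1\{r>t-s\}\,\tilde N(ds,dx,du,dr)+\int_{B\times\mathbb R_+}\mathbf 1\{r>t\}\,\tilde\eta_0(dx,dr),$$ where $\eta_t(B)=|\eta_t\cap B|$. $\mathrm{vol}$ is Lebesgue measure. *)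

theory Defs
  imports "HOL-Probability.Probability"
begin

text \<open>Points of R^d are modelled as elements of real^'d (d = CARD('d)).
 A configuration is a set of points; G depends on the fixed parameter eps > 0.\<close>

definition G :: "real \<Rightarrow> real^'d \<Rightarrow> real" where
  "G eps x = (1 + norm x) powr (- (real CARD('d) + eps))"

definition locally_finite_conf :: "(real^'d) set \<Rightarrow> bool" where
  "locally_finite_conf \<gamma> \<longleftrightarrow> (\<forall>B. bounded B \<longrightarrow> finite (\<gamma> \<inter> B))"

definition GammaG :: "real \<Rightarrow> (real^'d) set set" where
  "GammaG eps = {\<gamma>. locally_finite_conf \<gamma> \<and> (G eps) summable_on \<gamma>}"

definition pairing :: "(real^'d \<Rightarrow> real) \<Rightarrow> (real^'d) set \<Rightarrow> real" where
  "pairing f \<gamma> = (\<Sum>\<^sub>\<infinity>x\<in>\<gamma>. f x)"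

definition test_fun :: "real \<Rightarrow> (real^'d \<Rightarrow> real) \<Rightarrow> bool" where
  "test_fun eps f \<longleftrightarrow> continuous_on UNIV f \<and> bounded (range f) \<and>
     (\<exists>Mf. \<forall>x. \<bar>f x\<bar> \<le> Mf * G eps x)"

definition Gconv :: "real \<Rightarrow> (nat \<Rightarrow> (real^'d) set) \<Rightarrow> (real^'d) set \<Rightarrow> bool" where
  "Gconv eps \<gamma>s \<gamma> \<longleftrightarrow>
     (\<forall>f. test_fun eps f \<longrightarrow> (\<lambda>n. pairing f (\<gamma>s n)) \<longlonglongrightarrow> pairing f \<gamma>)"

definition G_open :: "real \<Rightarrow> (real^'d) set set \<Rightarrow> bool" where
  "G_open eps U \<longleftrightarrow> U \<subseteq> GammaG eps \<and>
     (\<forall>\<gamma>\<in>U. \<forall>\<gamma>s. (\<forall>n. \<gamma>s n \<in> GammaG eps) \<longrightarrow> Gconv eps \<gamma>s \<gamma> \<longrightarrow>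
        eventually (\<lambda>n. \<gamma>s n \<in> U) sequentially)"

definition GBorel :: "real \<Rightarrow> (real^'d) set measure" where
  "GBorel eps = sigma (GammaG eps) {U. G_open eps U}"

definition cadlag :: "real \<Rightarrow> (real \<Rightarrow> (real^'d) set) \<Rightarrow> bool" where
  "cadlag eps f \<longleftrightarrow>
     (\<forall>t\<ge>0. f t \<in> GammaG eps) \<and>
     (\<forall>t\<ge>0. \<forall>ss. (\<forall>n. ss n \<ge> t) \<longrightarrow> ss \<longlonglongrightarrow> t \<longrightarrow> Gconv eps (\<lambda>n. f (ss n)) (f t)) \<and>
     (\<forall>t>0. \<exists>l\<in>GammaG eps. \<forall>ss. (\<forall>n. 0 \<le> ss n \<and> ss n < t) \<longrightarrow> ss \<longlonglongrightarrow> t \<longrightarrow>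
         Gconv eps (\<lambda>n. f (ss n)) l)"

definition left_lim :: "real \<Rightarrow> (real \<Rightarrow> (real^'d) set) \<Rightarrow> real \<Rightarrow> (real^'d) set" where
  "left_lim eps f t = (THE l. l \<in> GammaG eps \<and>
      (\<forall>ss. (\<forall>n. 0 \<le> ss n \<and> ss n < t) \<longrightarrow> ss \<longlonglongrightarrow> t \<longrightarrow> Gconv eps (\<lambda>n. f (ss n)) l))"

definition pcount :: "'b set \<Rightarrow> 'b set \<Rightarrow> enat" where
  "pcount S A = (if finite (S \<inter> A) then enat (card (S \<inter> A)) else \<infinity>)"

definition mean_measure :: "(real \<times> (real^'d) \<times> real \<times> real) measure" where
  "mean_measure = density (lborel \<Otimes>\<^sub>M (lborel \<Otimes>\<^sub>M (lborel \<Otimes>\<^sub>M lborel)))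
     (\<lambda>(s,x,u,r). ennreal (indicator ({0..} \<times> UNIV \<times> {0..} \<times> {0..}) (s,x,u,r) * exp (- r)))"

definition poisson_pp :: "'a measure \<Rightarrow> 'b measure \<Rightarrow> ('a \<Rightarrow> 'b set) \<Rightarrow> bool" where
  "poisson_pp M \<mu> N \<longleftrightarrow> prob_space M \<and>
    (\<forall>A. A \<in> sets \<mu> \<longrightarrow> emeasure \<mu> A < \<infinity> \<longrightarrow>
        (\<lambda>\<omega>. card (N \<omega> \<inter> A)) \<in> measurable M (count_space UNIV) \<and>
        (AE \<omega> in M. finite (N \<omega> \<inter> A)) \<and>
        (\<forall>k. measure M {\<omega>\<in>space M. card (N \<omega> \<inter> A) = k} =
              measure \<mu> A ^ k / fact k * exp (- measure \<mu> A))) \<and>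
    (\<forall>(I::nat set) A. finite I \<longrightarrow> (\<forall>i\<in>I. A i \<in> sets \<mu> \<and> emeasure \<mu> (A i) < \<infinity>) \<longrightarrow>
        disjoint_family_on A I \<longrightarrow>
        prob_space.indep_vars M (\<lambda>_. count_space UNIV) (\<lambda>i \<omega>. card (N \<omega> \<inter> A i)) I)"

definition is_filtration :: "'a measure \<Rightarrow> (real \<Rightarrow> 'a measure) \<Rightarrow> bool" where
  "is_filtration M F \<longleftrightarrow> (\<forall>t\<ge>0. subalgebra M (F t)) \<and>
     (\<forall>s t. 0 \<le> s \<longrightarrow> s \<le> t \<longrightarrow> sets (F s) \<subseteq> sets (F t))"

definition indep_of :: "'a measure \<Rightarrow> 'a measure \<Rightarrow> ('a \<Rightarrow> 'c) \<Rightarrow> bool" where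
  "indep_of M F X \<longleftrightarrow> X \<in> measurable M (count_space UNIV) \<and>
     (\<forall>E\<in>sets F. \<forall>Y. measure M (E \<inter> {\<omega>\<in>space M. X \<omega> \<in> Y}) =
                      measure M E * measure M {\<omega>\<in>space M. X \<omega> \<in> Y})"

definition compatible :: "'a measure \<Rightarrow> (real \<Rightarrow> 'a measure) \<Rightarrow>
    ('a \<Rightarrow> (real \<times> (real^'d) \<times> real \<times> real) set) \<Rightarrow> bool" where
  "compatible M F N \<longleftrightarrow>
    (\<forall>A. A \<in> sets (borel :: ((real^'d) \<times> real \<times> real) measure) \<longrightarrow> A \<subseteq> UNIV \<times> {0..} \<times> {0..} \<longrightarrow>
      (\<forall>t\<ge>0. (\<lambda>\<omega>. pcount (N \<omega>) ({0..t} \<times> A)) \<in> measurable (F t) (count_space UNIV)) \<and>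
      (\<forall>t s. 0 < t \<longrightarrow> t < s \<longrightarrow> indep_of M (F t) (\<lambda>\<omega>. pcount (N \<omega>) ({t<..s} \<times> A))))"

definition sigma_eta0 :: "real \<Rightarrow> 'a measure \<Rightarrow> ('a \<Rightarrow> (real^'d) set) \<Rightarrow> 'a set set" where
  "sigma_eta0 eps M \<eta>0 = {\<eta>0 -` S \<inter> space M | S. S \<in> sets (GBorel eps)}"

definition sigma_N :: "'a measure \<Rightarrow> ('a \<Rightarrow> (real \<times> (real^'d) \<times> real \<times> real) set) \<Rightarrow> 'a set set" where
  "sigma_N M N = sets (sigma (space M)
     {{\<omega>\<in>space M. pcount (N \<omega>) A = k} | A k. A \<in> sets (borel :: (real \<times> (real^'d) \<times> real \<times> real) measure)})"

text \<open>eta0t is obtained from eta0 by attaching to each point an independent unit exponential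
 mark, independent of eta0 and N: each point of eta0 carries exactly one mark, and conditionally on
 (eta0, N) the marks are i.i.d. Exp(1) (expressed via the conditional Laplace functional,
 tested on functions supported in B x R with B bounded).\<close>
definition exp_marking :: "real \<Rightarrow> 'a measure \<Rightarrow> ('a \<Rightarrow> (real^'d) set) \<Rightarrow>
    ('a \<Rightarrow> (real \<times> (real^'d) \<times> real \<times> real) set) \<Rightarrow> ('a \<Rightarrow> ((real^'d) \<times> real) set) \<Rightarrow> bool" where
  "exp_marking eps M \<eta>0 N \<eta>0t \<longleftrightarrow>
    (\<forall>\<omega>\<in>space M. bij_betw fst (\<eta>0t \<omega>) (\<eta>0 \<omega>)) \<and>
    (\<forall>B f S T. B \<in> sets borel \<and> bounded B \<and> f \<in> borel_measurable borel \<and> (\<forall>p. 0 \<le> f p) \<and>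
        (\<forall>x r. x \<notin> B \<longrightarrow> f (x, r) = 0) \<and> S \<in> sigma_eta0 eps M \<eta>0 \<and> T \<in> sigma_N M N \<longrightarrow>
      (\<lambda>\<omega>. exp (- (\<Sum>p\<in>{p\<in>\<eta>0t \<omega>. fst p \<in> B}. f p))) \<in> borel_measurable M \<and>
      (\<lambda>\<omega>. (\<Prod>x\<in>\<eta>0 \<omega> \<inter> B. LINT r:{0..}|lborel. exp (- f (x, r)) * exp (- r))) \<in> borel_measurable M \<and>
      (\<integral>\<omega>. indicator (S \<inter> T) \<omega> * exp (- (\<Sum>p\<in>{p\<in>\<eta>0t \<omega>. fst p \<in> B}. f p)) \<partial>M) =
      (\<integral>\<omega>. indicator (S \<inter> T) \<omega> *
            (\<Prod>x\<in>\<eta>0 \<omega> \<inter> B. LINT r:{0..}|lborel. exp (- f (x, r)) * exp (- r)) \<partial>M))"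

definition is_solution :: "real \<Rightarrow> 'a measure \<Rightarrow> (real \<Rightarrow> 'a measure) \<Rightarrow>
    ('a \<Rightarrow> (real \<times> (real^'d) \<times> real \<times> real) set) \<Rightarrow> ('a \<Rightarrow> ((real^'d) \<times> real) set) \<Rightarrow>
    (real^'d \<Rightarrow> (real^'d) set \<Rightarrow> real) \<Rightarrow> (real \<Rightarrow> 'a \<Rightarrow> (real^'d) set) \<Rightarrow> bool" where
  "is_solution eps M F N \<eta>0t b \<eta> \<longleftrightarrow>
    (\<forall>t\<ge>0. \<eta> t \<in> measurable (F t) (GBorel eps)) \<and>
    (\<forall>\<omega>\<in>space M. cadlag eps (\<lambda>t. \<eta> t \<omega>)) \<and>
    (\<forall>B t. B \<in> sets borel \<and> bounded B \<and> 0 \<le> t \<longrightarrow>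
      (AE \<omega> in M. pcount (\<eta> t \<omega>) B =
          pcount (N \<omega>) {(s, x, u, r). 0 < s \<and> s \<le> t \<and> x \<in> B \<and>
                0 \<le> u \<and> u \<le> b x (left_lim eps (\<lambda>s'. \<eta> s' \<omega>) s) \<and> t - s < r}
        + pcount (\<eta>0t \<omega>) {(x, r). x \<in> B \<and> t < r}))"

end

theory Submission
  imports Defs
begin

(*
  Every point of \<eta>_t in B is either a point of the initial configuration whose
  unit-exponential lifetime exceeds t, or a point of the driving Poisson process
  N born at some time s \<le> t in B, accepted under the birth rate b \<le> sup b,
  and still alive at t. The expected number of initial survivors is
  e^{-t} E|\<eta>_0 \<inter> B| \<le> e^{-t} C0 vol B: the marking's Laplace functional shows that
  the survivor count has the generating function of an e^{-t}-thinning of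
  |\<eta>_0 \<inter> B|. The expected number of Poisson points in the region
  {0 < s \<le> t, x \<in> B, u \<le> sup b, r > t - s} is its mean measure
  sup b (1 - e^{-t}) vol B. The sum of the two bounds is a convex combination,
  hence at most max(sup b, C0) vol B.
*)

lemma test_fun_tent:
  fixes y :: "real^'d"
  assumes "0 < eps" "0 < \<delta>" "\<delta> \<le> 1"
  shows "test_fun eps (\<lambda>z. max 0 (1 - dist z y / \<delta>))"
proof -
  let ?D = "real CARD('d) + eps"
  let ?Mf = "(2 + norm y) powr ?D"
  have "\<bar>max 0 (1 - dist z y / \<delta>)\<bar> \<le> ?Mf * G eps z" for z
  proof (cases "dist z y < \<delta>")
    case True
    then have "norm z \<le> norm y + 1" using assms
      by (metis add_le_cancel_left dist_commute dist_norm norm_triangle_sub order.trans order_less_imp_le)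
    then have "(2 + norm y) powr (- ?D) \<le> G eps z"
      unfolding G_def using assms by (intro powr_mono2') (auto intro: add_pos_nonneg)
    then have "?Mf * (2 + norm y) powr (- ?D) \<le> ?Mf * G eps z"
      by (intro mult_left_mono) auto
    moreover have "?Mf * (2 + norm y) powr (- ?D) = 1"
      by (simp add: powr_add[symmetric] add_nonneg_eq_0_iff)
    moreover have "\<bar>max 0 (1 - dist z y / \<delta>)\<bar> \<le> 1" using assms by auto
    ultimately show ?thesis by linarith
  next
    case False
    then show ?thesis using assms by (auto simp: G_def field_simps)
  qed
  moreover have "continuous_on UNIV (\<lambda>z. max 0 (1 - dist z y / \<delta>))"
    using assms by (intro continuous_intros) auto
  moreover have "bounded (range (\<lambda>z. max 0 (1 - dist z y / \<delta>)))"
    unfolding bounded_iff using assms by (intro exI[of _ 1]) auto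
  ultimately show ?thesis unfolding test_fun_def by blast
qed

text \<open>Local finiteness isolates each point y of l, so a tent function around y narrower than
  the distance to every other point of l \<union> l' pairs to 1 with l and to 0 with l' unless y \<in> l'.\<close>

lemma GammaG_subset_of_pairing_eq:
  fixes l l' :: "(real^'d) set"
  assumes eps: "0 < eps" and l: "l \<in> GammaG eps" and l': "l' \<in> GammaG eps"
    and eq: "\<And>f. test_fun eps f \<Longrightarrow> pairing f l = pairing f l'"
  shows "l \<subseteq> l'"
proof
  fix y assume y: "y \<in> l"
  show "y \<in> l'"
  proof (rule ccontr)
    assume ny: "y \<notin> l'"
    have "finite ((l \<union> l') \<inter> cball y 1)" using l l' unfolding GammaG_def locally_finite_conf_def
      by (simp add: Int_Un_distrib2)
    from finite_set_avoid[OF this, of y] obtain d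
      where d: "d > 0" "\<forall>x\<in>(l \<union> l') \<inter> cball y 1. x \<noteq> y \<longrightarrow> d \<le> dist y x"
      by blast
    define \<delta> where "\<delta> = min d 1"
    have \<delta>: "0 < \<delta>" "\<delta> \<le> 1" using d by (auto simp: \<delta>_def)
    define \<phi> where "\<phi> = (\<lambda>z::real^'d. max 0 (1 - dist z y / \<delta>))"
    have \<phi>_0: "\<phi> z = 0" if "z \<in> l \<union> l'" "z \<noteq> y" for z
    proof -
      have "\<delta> \<le> dist z y" using d that by (cases "z \<in> cball y 1") (auto simp: \<delta>_def dist_commute)
      then show ?thesis using \<delta> by (auto simp: \<phi>_def field_simps)
    qed
    have "pairing \<phi> l = infsum \<phi> {y}"
      unfolding pairing_def using y \<phi>_0 by (intro infsum_cong_neutral) auto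
    then have "pairing \<phi> l = 1" by (simp add: \<phi>_def)
    moreover have "pairing \<phi> l' = 0" unfolding pairing_def using \<phi>_0 ny by (intro infsum_0) auto
    moreover have "test_fun eps \<phi>" unfolding \<phi>_def by (rule test_fun_tent[OF eps \<delta>])
    ultimately show False using eq by simp
  qed
qed

lemma GammaG_eq_of_pairing_eq:
  fixes l l' :: "(real^'d) set"
  assumes "0 < eps" "l \<in> GammaG eps" "l' \<in> GammaG eps"
    and "\<And>f. test_fun eps f \<Longrightarrow> pairing f l = pairing f l'"
  shows "l = l'"
proof (rule subset_antisym)
  show "l \<subseteq> l'" by (rule GammaG_subset_of_pairing_eq) (use assms in auto)
  show "l' \<subseteq> l" by (rule GammaG_subset_of_pairing_eq) (use assms in auto)
qed

text \<open>left_lim is a definite description; it denotes the left limit supplied by cadlag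
  because such limits are unique.\<close>

lemma left_lim_in_GammaG:
  fixes f :: "real \<Rightarrow> (real^'d) set"
  assumes eps: "0 < eps" and f: "cadlag eps f" and s: "0 < s"
  shows "left_lim eps f s \<in> GammaG eps"
proof -
  define is_lim where "is_lim l \<longleftrightarrow> l \<in> GammaG eps \<and>
    (\<forall>ss. (\<forall>n. 0 \<le> ss n \<and> ss n < s) \<longrightarrow> ss \<longlonglongrightarrow> s \<longrightarrow> Gconv eps (\<lambda>n. f (ss n)) l)" for l
  from f s obtain l where l: "is_lim l" unfolding cadlag_def is_lim_def by blast
  define ss where "ss n = s - s / real (Suc (Suc n))" for n
  have ss_below: "\<forall>n. 0 \<le> ss n \<and> ss n < s" using s by (auto simp: ss_def field_simps)
  have "(\<lambda>n. s / real (Suc (Suc n))) \<longlonglongrightarrow> 0"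
    using LIMSEQ_Suc[OF LIMSEQ_Suc[OF lim_const_over_n[of s]]] by simp
  then have ss_lim: "ss \<longlonglongrightarrow> s" unfolding ss_def using tendsto_diff[OF tendsto_const, of _ 0 sequentially s] by simp
  have "l' = l" if "is_lim l'" for l'
  proof (rule GammaG_eq_of_pairing_eq[OF eps])
    show "l' \<in> GammaG eps" "l \<in> GammaG eps" using l that by (auto simp: is_lim_def)
    fix \<phi> :: "real^'d \<Rightarrow> real" assume "test_fun eps \<phi>"
    then have "(\<lambda>n. pairing \<phi> (f (ss n))) \<longlonglongrightarrow> pairing \<phi> l'"
         "(\<lambda>n. pairing \<phi> (f (ss n))) \<longlonglongrightarrow> pairing \<phi> l"
      using that l ss_below ss_lim unfolding Gconv_def is_lim_def by blast+
    then show "pairing \<phi> l' = pairing \<phi> l" by (rule LIMSEQ_unique)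
  qed
  then have "left_lim eps f s = l" unfolding left_lim_def is_lim_def[symmetric] using l by (rule the_equality[rotated])
  with l show ?thesis by (simp add: is_lim_def)
qed

lemma nn_integral_exp_minus_atLeast:
  fixes c :: real
  shows "(\<integral>\<^sup>+r. ennreal (exp (- r)) * indicator {c..} r \<partial>lborel) = ennreal (exp (- c))"
  using nn_integral_has_integral_lebesgue'[OF _ has_integral_exp_minus_to_infinity[of 1 c]] by simp

lemma nn_integral_exp_minus_greaterThan:
  fixes c :: real
  shows "(\<integral>\<^sup>+r. ennreal (exp (- r)) * indicator {c<..} r \<partial>lborel) = ennreal (exp (- c))"
proof -
  have "AE r in lborel. ennreal (exp (- r)) * indicator {c<..} r = ennreal (exp (- r)) * indicator {c..} r"
    using AE_lborel_singleton[of c] by eventually_elim (auto split: split_indicator)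
  then show ?thesis by (simp add: nn_integral_cong_AE nn_integral_exp_minus_atLeast)
qed

lemma has_bochner_integral_exp_minus_atLeast:
  fixes c :: real
  shows "has_bochner_integral lborel (\<lambda>r. indicator {c..} r * exp (- r)) (exp (- c))"
  by (rule has_bochner_integral_nn_integral)
    (simp_all add: ennreal_mult ennreal_indicator mult.commute nn_integral_exp_minus_atLeast)

lemma has_bochner_integral_exp_minus_greaterThan:
  fixes c :: real
  shows "has_bochner_integral lborel (\<lambda>r. indicator {c<..} r * exp (- r)) (exp (- c))"
  by (rule has_bochner_integral_nn_integral)
    (simp_all add: ennreal_mult ennreal_indicator mult.commute nn_integral_exp_minus_greaterThan)

lemma exp_mark_survival_laplace:
  fixes t l :: real assumes t: "0 \<le> t"
  shows "(LINT r:{0..}|lborel. exp (- (l * indicator {t<..} r)) * exp (- r)) = 1 - (1 - exp (- l)) * exp (- t)"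
proof -
  have "has_bochner_integral lborel
      (\<lambda>r. indicator {0..} r * exp (- r) - (1 - exp (- l)) * (indicator {t<..} r * exp (- r)))
      (exp (- 0) - (1 - exp (- l)) * exp (- t))"
    by (intro has_bochner_integral_diff has_bochner_integral_mult_right
        has_bochner_integral_exp_minus_atLeast has_bochner_integral_exp_minus_greaterThan)
  moreover have "(\<lambda>r. indicator {0..} r * exp (- r) - (1 - exp (- l)) * (indicator {t<..} r * exp (- r)))
      = (\<lambda>r. indicator {0..} r *\<^sub>R (exp (- (l * indicator {t<..} r)) * exp (- r)))"
    using t by (auto simp: fun_eq_iff indicator_def algebra_simps exp_add[symmetric])
  ultimately show ?thesis unfolding set_lebesgue_integral_def
    by (simp add: has_bochner_integral_integral_eq)
qed

lemma nn_integral_exp_atLeastAtMost: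
  fixes t :: real assumes "0 \<le> t"
  shows "(\<integral>\<^sup>+ s. ennreal (exp (s - t)) * indicator {0..t} s \<partial>lborel) = ennreal (1 - exp (- t))"
proof -
  have "((\<lambda>s. exp (s - t)) has_integral (exp (t - t) - exp (0 - t))) {0..t}"
    using assms by (intro fundamental_theorem_of_calculus)
      (auto intro!: derivative_eq_intros simp: has_real_derivative_iff_has_vector_derivative[symmetric])
  then show ?thesis by (subst nn_integral_has_integral_lebesgue') auto
qed

lemma nn_integral_poisson_mean:
  fixes X :: "'a \<Rightarrow> nat"
  assumes "prob_space M" and X: "X \<in> measurable M (count_space UNIV)" and m: "0 \<le> m"
    and distr: "\<And>k. measure M {\<omega>\<in>space M. X \<omega> = k} = m ^ k / fact k * exp (- m)"
  shows "(\<integral>\<^sup>+\<omega>. ennreal (real (X \<omega>)) \<partial>M) = ennreal m"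
proof -
  interpret prob_space M by fact
  have ev: "{\<omega>\<in>space M. X \<omega> = k} \<in> sets M" for k using X by measurable
  have sums_m: "(\<lambda>k. real k * (m ^ k / fact k * exp (- m))) sums m"
  proof -
    have "(\<lambda>k. m * (m ^ k / fact k) * exp (- m)) sums (m * exp m * exp (- m))"
      using exp_converges[of m] by (intro sums_mult2 sums_mult) (simp add: divide_inverse mult.commute)
    moreover have "m * exp m * exp (- m) = m" by (simp add: exp_minus)
    moreover have "real (Suc k) * (m ^ Suc k / fact (Suc k) * exp (- m)) = m * (m ^ k / fact k) * exp (- m)" for k
      by (simp add: divide_simps del: of_nat_Suc)
    ultimately have "(\<lambda>k. real (Suc k) * (m ^ Suc k / fact (Suc k) * exp (- m))) sums m"
      by simp
    then show ?thesis by (subst (asm) sums_Suc_iff) simp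
  qed
  have "ennreal (real (X \<omega>)) = (\<Sum>k. ennreal (real k) * indicator {\<omega>\<in>space M. X \<omega> = k} \<omega>)"
    if "\<omega> \<in> space M" for \<omega>
  proof -
    have "(\<lambda>k. ennreal (real k) * indicator {\<omega>\<in>space M. X \<omega> = k} \<omega>) = (\<lambda>k. if k = X \<omega> then ennreal (real (X \<omega>)) else 0)"
      using that by (auto simp: fun_eq_iff)
    then show ?thesis using sums_single[of "X \<omega>" "\<lambda>_. ennreal (real (X \<omega>))"] sums_unique by metis
  qed
  then have "(\<integral>\<^sup>+\<omega>. ennreal (real (X \<omega>)) \<partial>M) = (\<integral>\<^sup>+\<omega>. (\<Sum>k. ennreal (real k) * indicator {\<omega>\<in>space M. X \<omega> = k} \<omega>) \<partial>M)"
    by (intro nn_integral_cong) auto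
  also have "\<dots> = (\<Sum>k. \<integral>\<^sup>+\<omega>. ennreal (real k) * indicator {\<omega>\<in>space M. X \<omega> = k} \<omega> \<partial>M)"
    by (rule nn_integral_suminf) (use ev in auto)
  also have "\<dots> = (\<Sum>k. ennreal (real k * (m ^ k / fact k * exp (- m))))"
    by (intro suminf_cong) (simp add: nn_integral_cmult_indicator ev emeasure_eq_measure distr ennreal_mult'[symmetric])
  also have "\<dots> = ennreal m"
    using sums_m m by (simp add: suminf_ennreal2 sums_summable sums_unique[symmetric])
  finally show ?thesis .
qed

lemma nn_integral_pair_mult:
  fixes f :: "'a \<Rightarrow> ennreal" and g :: "'b \<Rightarrow> ennreal"
  assumes N: "sigma_finite_measure N"
    and [measurable]: "f \<in> borel_measurable M" "g \<in> borel_measurable N"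
  shows "(\<integral>\<^sup>+p. f (fst p) * g (snd p) \<partial>(M \<Otimes>\<^sub>M N)) = (\<integral>\<^sup>+x. f x \<partial>M) * (\<integral>\<^sup>+y. g y \<partial>N)"
proof -
  have "(\<integral>\<^sup>+p. f (fst p) * g (snd p) \<partial>(M \<Otimes>\<^sub>M N)) = (\<integral>\<^sup>+x. \<integral>\<^sup>+y. f x * g y \<partial>N \<partial>M)"
    by (subst sigma_finite_measure.nn_integral_fst[OF N, symmetric]) simp_all
  also have "\<dots> = (\<integral>\<^sup>+x. f x * (\<integral>\<^sup>+y. g y \<partial>N) \<partial>M)"
    by (simp add: nn_integral_cmult)
  finally show ?thesis by (simp add: nn_integral_multc)
qed

text \<open>An atom (s, x, u, r) of N is a proposed birth at time s and place x with acceptance level u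
  and lifetime r. If b \<le> c, every atom that contributes to \<eta>_t(B) lies in birth_region t B c.\<close>

definition birth_region :: "real \<Rightarrow> (real^'d) set \<Rightarrow> real \<Rightarrow> (real \<times> (real^'d) \<times> real \<times> real) set" where
  "birth_region t B c = {(s, x, u, r). 0 < s \<and> s \<le> t \<and> x \<in> B \<and> 0 \<le> u \<and> u \<le> c \<and> t - s < r}"

lemma birth_region_in_sets_mean_measure:
  assumes "B \<in> sets borel"
  shows "birth_region t B c \<in> sets mean_measure"
proof -
  let ?L = "lborel \<Otimes>\<^sub>M (lborel \<Otimes>\<^sub>M (lborel \<Otimes>\<^sub>M lborel)) :: (real \<times> (real^'d) \<times> real \<times> real) measure"
  have [measurable]: "B \<in> sets lborel" using assms by simp
  have "{p \<in> space ?L. 0 < fst p \<and> fst p \<le> t \<and> fst (snd p) \<in> B \<and> 0 \<le> fst (snd (snd p))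
      \<and> fst (snd (snd p)) \<le> c \<and> t - fst p < snd (snd (snd p))} \<in> sets ?L"
    by measurable
  moreover have "birth_region t B c = {p \<in> space ?L. 0 < fst p \<and> fst p \<le> t \<and> fst (snd p) \<in> B
      \<and> 0 \<le> fst (snd (snd p)) \<and> fst (snd (snd p)) \<le> c \<and> t - fst p < snd (snd (snd p))}"
    unfolding birth_region_def space_pair_measure by (auto simp: case_prod_beta)
  ultimately have "birth_region t B c \<in> sets ?L" by (simp only:)
  then show ?thesis by (simp add: mean_measure_def)
qed

lemma emeasure_birth_region_le:
  fixes B :: "(real^'d) set"
  assumes B: "B \<in> sets borel" and t: "0 \<le> t" and c: "0 \<le> c"
  shows "emeasure mean_measure (birth_region t B c) \<le> ennreal (c * (1 - exp (- t))) * emeasure lborel B"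
proof -
  let ?L2 = "lborel \<Otimes>\<^sub>M lborel :: (real \<times> real) measure"
  let ?L3 = "lborel \<Otimes>\<^sub>M ?L2 :: ((real^'d) \<times> real \<times> real) measure"
  have [measurable]: "B \<in> sets lborel" using B by simp
  have sf2: "sigma_finite_measure ?L2" and sf3: "sigma_finite_measure ?L3"
    by (intro sigma_finite_pair_measure lborel.sigma_finite_measure_axioms)+
  define h :: "real \<times> (real^'d) \<times> real \<times> real \<Rightarrow> ennreal" where
    "h = (\<lambda>(s, x, u, r). indicator {0..t} s *
       (indicator B x * (indicator {0..c} u * (ennreal (exp (- r)) * indicator {t - s..} r))))"
  have h_measurable: "h \<in> borel_measurable (lborel \<Otimes>\<^sub>M ?L3)"
    unfolding h_def indicator_def atLeast_iff by measurable
  have slice: "(\<integral>\<^sup>+q. h (s, q) \<partial>?L3) = ennreal (exp (s - t)) * indicator {0..t} s * (ennreal c * emeasure lborel B)"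
    for s
  proof -
    have "(\<integral>\<^sup>+q. h (s, q) \<partial>?L3) = indicator {0..t} s * (\<integral>\<^sup>+q. indicator B (fst q) *
        (indicator {0..c} (fst (snd q)) * (ennreal (exp (- snd (snd q))) * indicator {t - s..} (snd (snd q)))) \<partial>?L3)"
      by (subst nn_integral_cmult[symmetric]) (auto simp: h_def case_prod_beta)
    also have "\<dots> = indicator {0..t} s * (emeasure lborel B * (ennreal c * ennreal (exp (s - t))))"
      using nn_integral_pair_mult[OF sf2, of "indicator B" lborel
          "\<lambda>p. indicator {0..c} (fst p) * (ennreal (exp (- snd p)) * indicator {t - s..} (snd p))"]
        nn_integral_pair_mult[OF lborel.sigma_finite_measure_axioms, of "indicator {0..c}" lborel
          "\<lambda>r. ennreal (exp (- r)) * indicator {t - s..} r"]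
      by (simp add: c nn_integral_exp_minus_atLeast nn_integral_indicator B)
    finally show ?thesis by (simp add: mult_ac)
  qed
  have "emeasure mean_measure (birth_region t B c) = (\<integral>\<^sup>+p. (\<lambda>(s,x,u,r). ennreal (indicator
      ({0..} \<times> UNIV \<times> {0..} \<times> {0..}) (s,x,u,r) * exp (- r))) p * indicator (birth_region t B c) p \<partial>(lborel \<Otimes>\<^sub>M ?L3))"
    using birth_region_in_sets_mean_measure[OF B, of t c]
    unfolding mean_measure_def by (simp add: emeasure_density)
  also have "\<dots> \<le> (\<integral>\<^sup>+p. h p \<partial>(lborel \<Otimes>\<^sub>M ?L3))"
    by (intro nn_integral_mono) (auto simp: h_def birth_region_def split: split_indicator)
  also have "\<dots> = (\<integral>\<^sup>+s. ennreal (exp (s - t)) * indicator {0..t} s * (ennreal c * emeasure lborel B) \<partial>lborel)"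
    by (subst sigma_finite_measure.nn_integral_fst[OF sf3 h_measurable, symmetric]) (simp add: slice)
  also have "\<dots> = ennreal (1 - exp (- t)) * (ennreal c * emeasure lborel B)"
    by (simp add: nn_integral_multc nn_integral_exp_atLeastAtMost t)
  finally show ?thesis using c t by (simp add: ennreal_mult' mult_ac)
qed

lemma borel_measurable_power_nat:
  fixes p :: real
  assumes "0 < p" "(\<lambda>\<omega>. real (X \<omega>)) \<in> borel_measurable M"
  shows "(\<lambda>\<omega>. p ^ X \<omega>) \<in> borel_measurable M"
proof -
  have "(\<lambda>\<omega>. p powr real (X \<omega>)) \<in> borel_measurable M" using assms by measurable
  then show ?thesis using assms by (simp add: powr_realpow)
qed

lemma integrable_power_nat:
  fixes p :: real
  assumes "finite_measure M" "0 < p" "p \<le> 1" "(\<lambda>\<omega>. real (X \<omega>)) \<in> borel_measurable M"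
  shows "integrable M (\<lambda>\<omega>. p ^ X \<omega>)"
  using assms borel_measurable_power_nat[of p X M]
  by (intro finite_measure.integrable_const_bound[where B=1]) (auto simp: power_le_one)

text \<open>The hypothesis pgf says that K has the generating function of a c-thinning of n. Its mean
  is the derivative of the generating function at 1, approached through the difference quotients
  E (1 - p^K) / (1 - p) = E (\<Sum>j<K. p^j), which are bounded by Bernoulli's inequality.\<close>

lemma nn_integral_geometric_sum_le_of_thinning_pgf:
  fixes K n :: "'a \<Rightarrow> nat"
  assumes "prob_space M"
    and K_meas: "(\<lambda>\<omega>. real (K \<omega>)) \<in> borel_measurable M"
    and n_meas: "(\<lambda>\<omega>. real (n \<omega>)) \<in> borel_measurable M"
    and c: "0 \<le> c" "c \<le> 1"
    and pgf: "\<And>p. 0 < p \<Longrightarrow> p < 1 \<Longrightarrow> (\<integral>\<omega>. p ^ K \<omega> \<partial>M) = (\<integral>\<omega>. (1 - (1 - p) * c) ^ n \<omega> \<partial>M)"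
    and p: "0 < p" "p < 1"
  shows "(\<integral>\<^sup>+\<omega>. ennreal (\<Sum>j<K \<omega>. p ^ j) \<partial>M) \<le> ennreal c * (\<integral>\<^sup>+\<omega>. ennreal (real (n \<omega>)) \<partial>M)"
proof -
  interpret prob_space M by fact
  define q where "q = 1 - (1 - p) * c"
  have "0 \<le> (1 - p) * c" "(1 - p) * c \<le> 1 - p" using p c by (simp_all add: mult_left_le)
  then have q: "0 < q" "q \<le> 1" using p unfolding q_def by linarith+
  have "(\<integral>\<^sup>+\<omega>. ennreal (\<Sum>j<K \<omega>. p ^ j) \<partial>M) = (\<integral>\<^sup>+\<omega>. ennreal ((1 - p ^ K \<omega>) / (1 - p)) \<partial>M)"
    using p by (simp add: sum_gp_strict)
  also have "\<dots> = ennreal ((1 - (\<integral>\<omega>. p ^ K \<omega> \<partial>M)) / (1 - p))"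
    using p integrable_power_nat[OF finite_measure_axioms p(1) _ K_meas]
    by (subst nn_integral_eq_integral) (auto simp: power_le_one prob_space)
  also have "\<dots> = ennreal ((1 - (\<integral>\<omega>. q ^ n \<omega> \<partial>M)) / (1 - p))"
    using pgf[OF p] by (simp add: q_def)
  also have "\<dots> = (\<integral>\<^sup>+\<omega>. ennreal ((1 - q ^ n \<omega>) / (1 - p)) \<partial>M)"
    using p q integrable_power_nat[OF finite_measure_axioms q(1,2) n_meas]
    by (subst nn_integral_eq_integral) (auto simp: power_le_one prob_space)
  also have "\<dots> \<le> (\<integral>\<^sup>+\<omega>. ennreal c * ennreal (real (n \<omega>)) \<partial>M)"
  proof (rule nn_integral_mono)
    fix \<omega>
    have "1 + real (n \<omega>) * (q - 1) \<le> (1 + (q - 1)) ^ n \<omega>"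
      by (rule Bernoulli_inequality) (use q in auto)
    then have "1 - q ^ n \<omega> \<le> c * real (n \<omega>) * (1 - p)" by (simp add: q_def algebra_simps)
    then show "ennreal ((1 - q ^ n \<omega>) / (1 - p)) \<le> ennreal c * ennreal (real (n \<omega>))"
      using p c by (simp add: ennreal_mult'[symmetric] ennreal_leI divide_le_eq)
  qed
  also have "\<dots> = ennreal c * (\<integral>\<^sup>+\<omega>. ennreal (real (n \<omega>)) \<partial>M)"
    by (rule nn_integral_cmult) (use n_meas in measurable)
  finally show ?thesis .
qed

lemma nn_integral_le_of_thinning_pgf:
  fixes K n :: "'a \<Rightarrow> nat"
  assumes "prob_space M"
    and K_meas: "(\<lambda>\<omega>. real (K \<omega>)) \<in> borel_measurable M"
    and n_meas: "(\<lambda>\<omega>. real (n \<omega>)) \<in> borel_measurable M"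
    and c: "0 \<le> c" "c \<le> 1"
    and pgf: "\<And>p. 0 < p \<Longrightarrow> p < 1 \<Longrightarrow> (\<integral>\<omega>. p ^ K \<omega> \<partial>M) = (\<integral>\<omega>. (1 - (1 - p) * c) ^ n \<omega> \<partial>M)"
  shows "(\<integral>\<^sup>+\<omega>. ennreal (real (K \<omega>)) \<partial>M) \<le> ennreal c * (\<integral>\<^sup>+\<omega>. ennreal (real (n \<omega>)) \<partial>M)"
proof -
  define p :: "nat \<Rightarrow> real" where "p m = 1 - 1 / real (Suc (Suc m))" for m
  have p: "0 < p m" "p m < 1" for m by (auto simp: p_def)
  define S where "S m \<omega> = ennreal (\<Sum>j<K \<omega>. p m ^ j)" for m \<omega>
  have S_meas: "S m \<in> borel_measurable M" for m
  proof -
    have "S m = (\<lambda>\<omega>. ennreal ((1 - p m ^ K \<omega>) / (1 - p m)))"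
      using p[of m] by (simp add: S_def sum_gp_strict fun_eq_iff)
    then show ?thesis using borel_measurable_power_nat[OF p(1) K_meas] by simp
  qed
  have S_incseq: "incseq S"
  proof (rule incseq_SucI, rule le_funI)
    fix m \<omega>
    have "p m \<le> p (Suc m)" by (simp add: p_def frac_le)
    then show "S m \<omega> \<le> S (Suc m) \<omega>"
      unfolding S_def using p by (intro ennreal_leI sum_mono power_mono) (auto intro: less_imp_le)
  qed
  have "(SUP m. S m \<omega>) = ennreal (real (K \<omega>))" for \<omega>
  proof (rule LIMSEQ_unique[OF LIMSEQ_SUP])
    show "incseq (\<lambda>m. S m \<omega>)" using S_incseq by (auto simp: incseq_def le_fun_def)
    have "p \<longlonglongrightarrow> 1 - 0"
      unfolding p_def by (intro tendsto_intros LIMSEQ_Suc[OF LIMSEQ_Suc[OF lim_const_over_n]])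
    then have "(\<lambda>m. \<Sum>j<K \<omega>. p m ^ j) \<longlonglongrightarrow> (\<Sum>j<K \<omega>. 1 ^ j)" by (intro tendsto_intros) simp
    then show "(\<lambda>m. S m \<omega>) \<longlonglongrightarrow> ennreal (real (K \<omega>))" unfolding S_def by (intro tendsto_ennrealI) simp
  qed
  then have "(\<integral>\<^sup>+\<omega>. ennreal (real (K \<omega>)) \<partial>M) = (SUP m. \<integral>\<^sup>+\<omega>. S m \<omega> \<partial>M)"
    using nn_integral_monotone_convergence_SUP[OF S_incseq S_meas] by simp
  also have "\<dots> \<le> ennreal c * (\<integral>\<^sup>+\<omega>. ennreal (real (n \<omega>)) \<partial>M)"
    unfolding S_def by (rule SUP_least) (rule nn_integral_geometric_sum_le_of_thinning_pgf[OF assms(1) K_meas n_meas c pgf p])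
  finally show ?thesis .
qed

lemma space_GBorel: "space (GBorel eps) = GammaG eps"
  unfolding GBorel_def by (rule space_measure_of) (auto simp: G_open_def)

lemma space_in_sigma_eta0:
  fixes \<eta>0 :: "'a \<Rightarrow> (real^'d) set"
  assumes "\<And>\<omega>. \<omega> \<in> space M \<Longrightarrow> \<eta>0 \<omega> \<in> GammaG eps"
  shows "space M \<in> sigma_eta0 eps M \<eta>0"
proof -
  have "GammaG eps \<in> sets (GBorel eps :: (real^'d) set measure)"
    by (metis sets.top space_GBorel)
  moreover have "\<eta>0 -` GammaG eps \<inter> space M = space M" using assms by auto
  ultimately show ?thesis unfolding sigma_eta0_def by blast
qed

lemma space_in_sigma_N: "space M \<in> sigma_N M N"
  unfolding sigma_N_def by (rule sets.top[of "measure_of _ _ _", unfolded space_measure_of_conv])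

lemma exp_marking_survivors_laplace:
  fixes M :: "'a measure" and \<eta>0 :: "'a \<Rightarrow> (real^'d) set" and \<eta>0t :: "'a \<Rightarrow> ((real^'d) \<times> real) set"
  assumes marks: "exp_marking eps M \<eta>0 N \<eta>0t"
    and \<eta>0: "\<And>\<omega>. \<omega> \<in> space M \<Longrightarrow> \<eta>0 \<omega> \<in> GammaG eps"
    and B: "B \<in> sets borel" "bounded B" and t: "0 \<le> t" and l: "0 \<le> l"
  defines "K \<omega> \<equiv> card {p\<in>\<eta>0t \<omega>. fst p \<in> B \<and> t < snd p}"
    and "q \<equiv> 1 - (1 - exp (- l)) * exp (- t)"
  shows "(\<lambda>\<omega>. exp (- (l * real (K \<omega>)))) \<in> borel_measurable M"
    and "(\<lambda>\<omega>. q ^ card (\<eta>0 \<omega> \<inter> B)) \<in> borel_measurable M"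
    and "(\<integral>\<omega>. exp (- (l * real (K \<omega>))) \<partial>M) = (\<integral>\<omega>. q ^ card (\<eta>0 \<omega> \<inter> B) \<partial>M)"
proof -
  define f where "f p = l * indicator (B \<times> {t<..}) p" for p :: "(real^'d) \<times> real"
  have bij: "bij_betw fst (\<eta>0t \<omega>) (\<eta>0 \<omega>)" if "\<omega> \<in> space M" for \<omega>
    using marks that unfolding exp_marking_def by blast
  have marked_finite: "finite {p\<in>\<eta>0t \<omega>. fst p \<in> B}" if "\<omega> \<in> space M" for \<omega>
  proof (rule finite_imageD)
    show "inj_on fst {p\<in>\<eta>0t \<omega>. fst p \<in> B}"
      using bij[OF that] unfolding bij_betw_def by (elim conjE) (erule inj_on_subset, blast)
    have "fst ` {p\<in>\<eta>0t \<omega>. fst p \<in> B} \<subseteq> \<eta>0 \<omega> \<inter> B" using bij[OF that] unfolding bij_betw_def by blast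
    moreover have "finite (\<eta>0 \<omega> \<inter> B)"
      using \<eta>0[OF that] B(2) unfolding GammaG_def locally_finite_conf_def by blast
    ultimately show "finite (fst ` {p\<in>\<eta>0t \<omega>. fst p \<in> B})" by (rule finite_subset)
  qed
  have sum_f: "(\<Sum>p\<in>{p\<in>\<eta>0t \<omega>. fst p \<in> B}. f p) = l * real (K \<omega>)" if "\<omega> \<in> space M" for \<omega>
  proof -
    have "(\<Sum>p\<in>{p\<in>\<eta>0t \<omega>. fst p \<in> B}. indicator (B \<times> {t<..}) p)
        = real (card ({p\<in>\<eta>0t \<omega>. fst p \<in> B} \<inter> (B \<times> {t<..})))"
      using sum.inter_restrict[OF marked_finite[OF that], of "\<lambda>_. 1::real" "B \<times> {t<..}"]
      by (simp add: indicator_def of_bool_def)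
    also have "{p\<in>\<eta>0t \<omega>. fst p \<in> B} \<inter> (B \<times> {t<..}) = {p\<in>\<eta>0t \<omega>. fst p \<in> B \<and> t < snd p}"
      by auto
    finally show ?thesis by (simp add: f_def K_def sum_distrib_left[symmetric])
  qed
  have prod_f: "(\<Prod>x\<in>\<eta>0 \<omega> \<inter> B. LINT r:{0..}|lborel. exp (- f (x, r)) * exp (- r)) = q ^ card (\<eta>0 \<omega> \<inter> B)" for \<omega>
  proof -
    have "(LINT r:{0..}|lborel. exp (- f (x, r)) * exp (- r)) = q" if "x \<in> B" for x
      using exp_mark_survival_laplace[OF t, of l] that by (simp add: f_def q_def indicator_def)
    then show ?thesis by simp
  qed
  have "B \<times> {t<..} \<in> sets borel" using B(1) by (intro borel_Times) auto
  then have "f \<in> borel_measurable borel" unfolding f_def by measurable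
  then have "B \<in> sets borel \<and> bounded B \<and> f \<in> borel_measurable borel \<and> (\<forall>p. 0 \<le> f p) \<and>
      (\<forall>x r. x \<notin> B \<longrightarrow> f (x, r) = 0) \<and> space M \<in> sigma_eta0 eps M \<eta>0 \<and> space M \<in> sigma_N M N"
    using B l space_in_sigma_eta0[of M \<eta>0, OF \<eta>0] space_in_sigma_N by (auto simp: f_def)
  note marking = marks[unfolded exp_marking_def, THEN conjunct2, rule_format, OF this]
  show "(\<lambda>\<omega>. exp (- (l * real (K \<omega>)))) \<in> borel_measurable M"
    using marking[THEN conjunct1] by (rule measurable_cong[THEN iffD1, rotated]) (simp add: sum_f)
  show "(\<lambda>\<omega>. q ^ card (\<eta>0 \<omega> \<inter> B)) \<in> borel_measurable M"
    using marking[THEN conjunct2, THEN conjunct1] by (simp add: prod_f)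
  from marking[THEN conjunct2, THEN conjunct2]
  show "(\<integral>\<omega>. exp (- (l * real (K \<omega>))) \<partial>M) = (\<integral>\<omega>. q ^ card (\<eta>0 \<omega> \<inter> B) \<partial>M)"
    by (simp add: sum_f prod_f cong: Bochner_Integration.integral_cong)
qed

lemma exp_marking_survivors:
  fixes M :: "'a measure" and \<eta>0 :: "'a \<Rightarrow> (real^'d) set" and \<eta>0t :: "'a \<Rightarrow> ((real^'d) \<times> real) set"
  assumes "prob_space M" and marks: "exp_marking eps M \<eta>0 N \<eta>0t"
    and \<eta>0: "\<And>\<omega>. \<omega> \<in> space M \<Longrightarrow> \<eta>0 \<omega> \<in> GammaG eps"
    and B: "B \<in> sets borel" "bounded B" and t: "0 \<le> t"
  shows "(\<lambda>\<omega>. ennreal (real (card {p\<in>\<eta>0t \<omega>. fst p \<in> B \<and> t < snd p}))) \<in> borel_measurable M"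
    and "(\<integral>\<^sup>+\<omega>. ennreal (real (card {p\<in>\<eta>0t \<omega>. fst p \<in> B \<and> t < snd p})) \<partial>M)
        \<le> ennreal (exp (- t)) * (\<integral>\<^sup>+\<omega>. ennreal (real (card (\<eta>0 \<omega> \<inter> B))) \<partial>M)"
proof -
  define K where "K \<omega> = card {p\<in>\<eta>0t \<omega>. fst p \<in> B \<and> t < snd p}" for \<omega>
  define n where "n \<omega> = card (\<eta>0 \<omega> \<inter> B)" for \<omega>
  define q where "q = 1 - (1 - exp (- 1)) * exp (- t)"
  note laplace = exp_marking_survivors_laplace[OF marks \<eta>0 B t, folded K_def n_def]
  have K_meas: "(\<lambda>\<omega>. real (K \<omega>)) \<in> borel_measurable M"
  proof -
    have "(\<lambda>x. - ln x :: real) \<in> borel_measurable borel" by measurable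
    from measurable_compose[OF laplace(1)[of 1] this] show ?thesis by simp
  qed
  have "0 < 1 - exp (- 1::real)" "1 - exp (- 1::real) < 1" "0 < exp (- t)" "exp (- t) \<le> 1"
    using t by auto
  then have q: "0 < q" "q < 1" unfolding q_def by (smt (verit) mult_left_le mult_pos_pos)+
  have n_meas: "(\<lambda>\<omega>. real (n \<omega>)) \<in> borel_measurable M"
  proof -
    have "(\<lambda>x. ln x / ln q) \<in> borel_measurable borel" by measurable
    from measurable_compose[OF laplace(2)[of 1, folded q_def] this]
    have "(\<lambda>\<omega>. ln (q ^ n \<omega>) / ln q) \<in> borel_measurable M" by simp
    then show ?thesis using q by (simp add: ln_realpow)
  qed
  have "(\<integral>\<omega>. p ^ K \<omega> \<partial>M) = (\<integral>\<omega>. (1 - (1 - p) * exp (- t)) ^ n \<omega> \<partial>M)" if "0 < p" "p < 1" for p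
  proof -
    have "p ^ K \<omega> = exp (- (- ln p * real (K \<omega>)))" for \<omega>
      using exp_of_nat_mult[of "K \<omega>" "ln p"] that by (simp add: mult.commute)
    then show ?thesis using laplace(3)[of "- ln p"] that by simp
  qed
  from nn_integral_le_of_thinning_pgf[OF \<open>prob_space M\<close> K_meas n_meas _ _ this]
  show "(\<integral>\<^sup>+\<omega>. ennreal (real (card {p\<in>\<eta>0t \<omega>. fst p \<in> B \<and> t < snd p})) \<partial>M)
      \<le> ennreal (exp (- t)) * (\<integral>\<^sup>+\<omega>. ennreal (real (card (\<eta>0 \<omega> \<inter> B))) \<partial>M)"
    using t by (simp add: K_def n_def)
  show "(\<lambda>\<omega>. ennreal (real (card {p\<in>\<eta>0t \<omega>. fst p \<in> B \<and> t < snd p}))) \<in> borel_measurable M"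
    using K_meas unfolding K_def by measurable
qed

lemma card_le_of_pcount_eq_add:
  assumes "finite (X \<inter> A)" "finite (Y \<inter> C)" "Y \<inter> C' \<subseteq> Y \<inter> C"
    and "pcount X A = pcount Y C' + pcount Z D"
  shows "card (X \<inter> A) \<le> card (Y \<inter> C) + card (Z \<inter> D)"
proof -
  have "finite (Y \<inter> C')" using assms(2,3) by (rule finite_subset[rotated])
  moreover have "finite (Z \<inter> D)"
    using assms(1,4) by (cases "finite (Z \<inter> D)") (simp_all add: pcount_def)
  ultimately have "card (X \<inter> A) = card (Y \<inter> C') + card (Z \<inter> D)"
    using assms(1,4) by (simp add: pcount_def)
  moreover have "card (Y \<inter> C') \<le> card (Y \<inter> C)" using assms(2,3) by (rule card_mono)
  ultimately show ?thesis by simp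
qed

lemma solution_count_le:
  fixes \<eta> :: "real \<Rightarrow> 'a \<Rightarrow> (real^'d) set"
  assumes eps: "0 < eps" and sol: "is_solution eps M F N \<eta>0t b \<eta>"
    and b_le: "\<And>x \<gamma>. \<gamma> \<in> GammaG eps \<Longrightarrow> b x \<gamma> \<le> c"
    and B: "B \<in> sets borel" "bounded B" and t: "0 \<le> t"
    and N_finite: "AE \<omega> in M. finite (N \<omega> \<inter> birth_region t B c)"
  shows "AE \<omega> in M. card (\<eta> t \<omega> \<inter> B)
           \<le> card (N \<omega> \<inter> birth_region t B c) + card {p\<in>\<eta>0t \<omega>. fst p \<in> B \<and> t < snd p}"
proof -
  have "AE \<omega> in M. pcount (\<eta> t \<omega>) B =
      pcount (N \<omega>) {(s, x, u, r). 0 < s \<and> s \<le> t \<and> x \<in> B \<and>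
        0 \<le> u \<and> u \<le> b x (left_lim eps (\<lambda>s'. \<eta> s' \<omega>) s) \<and> t - s < r}
      + pcount (\<eta>0t \<omega>) {(x, r). x \<in> B \<and> t < r}"
    using sol B t unfolding is_solution_def by blast
  with N_finite AE_space show ?thesis
  proof eventually_elim
    case (elim \<omega>)
    have cadlag: "cadlag eps (\<lambda>t. \<eta> t \<omega>)" using sol elim unfolding is_solution_def by blast
    then have "\<eta> t \<omega> \<in> GammaG eps" using t unfolding cadlag_def by simp
    then have "finite (\<eta> t \<omega> \<inter> B)" using B(2) unfolding GammaG_def locally_finite_conf_def by blast
    moreover have "N \<omega> \<inter> {(s, x, u, r). 0 < s \<and> s \<le> t \<and> x \<in> B \<and>
        0 \<le> u \<and> u \<le> b x (left_lim eps (\<lambda>s'. \<eta> s' \<omega>) s) \<and> t - s < r} \<subseteq> N \<omega> \<inter> birth_region t B c"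
    proof (clarsimp simp: birth_region_def)
      fix s x u assume "0 < s" "u \<le> b x (left_lim eps (\<lambda>s'. \<eta> s' \<omega>) s)"
      then show "u \<le> c" using b_le[OF left_lim_in_GammaG[OF eps cadlag \<open>0 < s\<close>], of x] by linarith
    qed
    ultimately have "card (\<eta> t \<omega> \<inter> B) \<le> card (N \<omega> \<inter> birth_region t B c) + card (\<eta>0t \<omega> \<inter> {(x, r). x \<in> B \<and> t < r})"
      using elim by (intro card_le_of_pcount_eq_add) auto
    moreover have "\<eta>0t \<omega> \<inter> {(x, r). x \<in> B \<and> t < r} = {p\<in>\<eta>0t \<omega>. fst p \<in> B \<and> t < snd p}" by auto
    ultimately show ?case by simp
  qed
qed

lemma nn_integral_solution_count_le:
  fixes M :: "'a measure" and \<eta> :: "real \<Rightarrow> 'a \<Rightarrow> (real^'d) set"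
    and \<eta>0 :: "'a \<Rightarrow> (real^'d) set" and B :: "(real^'d) set"
  assumes eps: "0 < eps" and prob: "prob_space M" and pois: "poisson_pp M mean_measure N"
    and marks: "exp_marking eps M \<eta>0 N \<eta>0t" and \<eta>0: "\<And>\<omega>. \<omega> \<in> space M \<Longrightarrow> \<eta>0 \<omega> \<in> GammaG eps"
    and sol: "is_solution eps M F N \<eta>0t b \<eta>"
    and c: "0 \<le> c" and b_le: "\<And>x \<gamma>. \<gamma> \<in> GammaG eps \<Longrightarrow> b x \<gamma> \<le> c"
    and B: "B \<in> sets borel" "bounded B" and t: "0 \<le> t"
  shows "(\<integral>\<^sup>+\<omega>. ennreal (card (\<eta> t \<omega> \<inter> B)) \<partial>M)
    \<le> ennreal (c * (1 - exp (- t))) * emeasure lborel B + ennreal (exp (- t)) * (\<integral>\<^sup>+\<omega>. ennreal (card (\<eta>0 \<omega> \<inter> B)) \<partial>M)"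
proof -
  define A where "A = birth_region t B c"
  have A: "A \<in> sets mean_measure" unfolding A_def by (rule birth_region_in_sets_mean_measure[OF B(1)])
  have A_le: "emeasure mean_measure A \<le> ennreal (c * (1 - exp (- t))) * emeasure lborel B"
    unfolding A_def by (rule emeasure_birth_region_le[OF B(1) t c])
  also have "\<dots> < \<infinity>"
    using emeasure_bounded_finite[OF B(2)] by (simp add: ennreal_mult_less_top)
  finally have A_finite: "emeasure mean_measure A < \<infinity>" .
  from pois A A_finite have N_meas: "(\<lambda>\<omega>. card (N \<omega> \<inter> A)) \<in> measurable M (count_space UNIV)"
    and N_finite: "AE \<omega> in M. finite (N \<omega> \<inter> A)"
    and N_distr: "\<And>k. measure M {\<omega>\<in>space M. card (N \<omega> \<inter> A) = k} =
        measure mean_measure A ^ k / fact k * exp (- measure mean_measure A)"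
    unfolding poisson_pp_def by blast+
  have "(\<integral>\<^sup>+\<omega>. ennreal (card (N \<omega> \<inter> A)) \<partial>M) = ennreal (measure mean_measure A)"
    by (rule nn_integral_poisson_mean[OF prob N_meas _ N_distr]) simp
  also have "\<dots> = emeasure mean_measure A"
    using A_finite by (simp add: emeasure_eq_ennreal_measure)
  finally have N_mean: "(\<integral>\<^sup>+\<omega>. ennreal (card (N \<omega> \<inter> A)) \<partial>M) = emeasure mean_measure A" .
  note survivors = exp_marking_survivors[OF prob marks \<eta>0 B t]
  have "AE \<omega> in M. card (\<eta> t \<omega> \<inter> B) \<le> card (N \<omega> \<inter> A) + card {p\<in>\<eta>0t \<omega>. fst p \<in> B \<and> t < snd p}"
    unfolding A_def by (rule solution_count_le[OF eps sol b_le B t N_finite[unfolded A_def]])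
  then have "AE \<omega> in M. ennreal (card (\<eta> t \<omega> \<inter> B)) \<le>
      ennreal (card (N \<omega> \<inter> A)) + ennreal (card {p\<in>\<eta>0t \<omega>. fst p \<in> B \<and> t < snd p})"
    by eventually_elim (simp add: ennreal_plus[symmetric] del: ennreal_plus)
  then have "(\<integral>\<^sup>+\<omega>. ennreal (card (\<eta> t \<omega> \<inter> B)) \<partial>M) \<le>
      (\<integral>\<^sup>+\<omega>. ennreal (card (N \<omega> \<inter> A)) \<partial>M) + (\<integral>\<^sup>+\<omega>. ennreal (card {p\<in>\<eta>0t \<omega>. fst p \<in> B \<and> t < snd p}) \<partial>M)"
    using N_meas survivors(1) by (subst nn_integral_add[symmetric]) (auto intro!: nn_integral_mono_AE)
  also have "\<dots> \<le> ennreal (c * (1 - exp (- t))) * emeasure lborel B + ennreal (exp (- t)) * (\<integral>\<^sup>+\<omega>. ennreal (card (\<eta>0 \<omega> \<inter> B)) \<partial>M)"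
    unfolding N_mean by (intro add_mono A_le survivors(2))
  finally show ?thesis .
qed

lemma ennreal_convex_combination_le_max:
  fixes v :: ennreal
  assumes "0 \<le> a" "0 \<le> b" "0 \<le> e" "e \<le> 1"
  shows "ennreal (a * (1 - e)) * v + ennreal e * (ennreal b * v) \<le> ennreal (max a b) * v"
proof -
  have "a * (1 - e) + e * b \<le> max a b * (1 - e) + e * max a b"
    using assms by (intro add_mono mult_right_mono mult_left_mono) auto
  also have "\<dots> = max a b" by (simp add: algebra_simps)
  finally have "ennreal (a * (1 - e) + e * b) \<le> ennreal (max a b)" by (rule ennreal_leI)
  then have "ennreal (a * (1 - e) + e * b) * v \<le> ennreal (max a b) * v" by (rule mult_right_mono) simp
  then show ?thesis using assms by (simp add: ennreal_plus ennreal_mult distrib_right mult.assoc)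
qed

theorem corollary4p4:
  fixes eps :: real
    and M :: "'a measure" and F :: "real \<Rightarrow> 'a measure"
    and N :: "'a \<Rightarrow> (real \<times> (real^'d) \<times> real \<times> real) set"
    and \<eta>0 :: "'a \<Rightarrow> (real^'d) set" and \<eta>0t :: "'a \<Rightarrow> ((real^'d) \<times> real) set"
    and b :: "(real^'d) \<Rightarrow> (real^'d) set \<Rightarrow> real"
    and \<eta> :: "real \<Rightarrow> 'a \<Rightarrow> (real^'d) set"
    and Mc C0 :: real
  assumes eps_pos: "0 < eps"
    and prob: "prob_space M"
    and filt: "is_filtration M F"
    and pois: "poisson_pp M mean_measure N"
    and compat: "compatible M F N"
    and eta0_meas: "\<eta>0 \<in> measurable (F 0) (GBorel eps)"
    and eta0_indep: "prob_space.indep_set M (sigma_eta0 eps M \<eta>0) (sigma_N M N)"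
    and marks: "exp_marking eps M \<eta>0 N \<eta>0t"
    and b_meas: "(\<lambda>(x, \<gamma>). b x \<gamma>) \<in> borel_measurable (borel \<Otimes>\<^sub>M GBorel eps)"
    and b_nonneg: "\<forall>x. \<forall>\<gamma>\<in>GammaG eps. 0 \<le> b x \<gamma>"
    and b_bdd: "bdd_above {b x \<gamma> | x \<gamma>. \<gamma> \<in> GammaG eps}"
    and Mc_pos: "0 < Mc"
    and b_lip: "\<forall>x y. \<forall>\<gamma>\<in>GammaG eps. \<bar>b x (\<gamma> \<union> {y}) - b x \<gamma>\<bar> \<le> Mc * G eps (x - y)"
    and sol: "is_solution eps M F N \<eta>0t b \<eta>"
    and C0_pos: "0 < C0"
    and init: "\<forall>B. B \<in> sets borel \<and> bounded B \<longrightarrow>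
               (\<integral>\<^sup>+\<omega>. ennreal (card (\<eta>0 \<omega> \<inter> B)) \<partial>M) \<le> ennreal C0 * emeasure lborel B"
  shows "0 < max (Sup {b x \<gamma> | x \<gamma>. \<gamma> \<in> GammaG eps}) C0 \<and>
         (\<forall>t>0. \<forall>B. B \<in> sets borel \<and> bounded B \<longrightarrow>
            (\<integral>\<^sup>+\<omega>. ennreal (card (\<eta> t \<omega> \<inter> B)) \<partial>M)
              \<le> ennreal (max (Sup {b x \<gamma> | x \<gamma>. \<gamma> \<in> GammaG eps}) C0) * emeasure lborel B)"
proof -
  define bb where "bb = Sup {b x \<gamma> | x \<gamma>. \<gamma> \<in> GammaG eps}"
  have b_le: "b x \<gamma> \<le> bb" if "\<gamma> \<in> GammaG eps" for x \<gamma>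
    unfolding bb_def by (rule cSup_upper) (use that b_bdd in auto)
  have "{} \<in> GammaG eps" by (simp add: GammaG_def locally_finite_conf_def)
  then have bb_nonneg: "0 \<le> bb" using b_le b_nonneg by (meson order_trans)
  have \<eta>0_in: "\<eta>0 \<omega> \<in> GammaG eps" if "\<omega> \<in> space M" for \<omega>
    using measurable_space[OF eta0_meas] filt that
    by (auto simp: space_GBorel is_filtration_def subalgebra_def)
  have "(\<integral>\<^sup>+\<omega>. ennreal (card (\<eta> t \<omega> \<inter> B)) \<partial>M) \<le> ennreal (max bb C0) * emeasure lborel B"
    if t: "0 < t" and B: "B \<in> sets borel" "bounded B" for t B
  proof -
    have "(\<integral>\<^sup>+\<omega>. ennreal (card (\<eta> t \<omega> \<inter> B)) \<partial>M)
        \<le> ennreal (bb * (1 - exp (- t))) * emeasure lborel B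
          + ennreal (exp (- t)) * (\<integral>\<^sup>+\<omega>. ennreal (card (\<eta>0 \<omega> \<inter> B)) \<partial>M)"
      using t by (intro nn_integral_solution_count_le[OF eps_pos prob pois marks \<eta>0_in sol bb_nonneg b_le B]) auto
    also have "\<dots> \<le> ennreal (bb * (1 - exp (- t))) * emeasure lborel B
          + ennreal (exp (- t)) * (ennreal C0 * emeasure lborel B)"
      using init B by (intro add_left_mono mult_left_mono) auto
    also have "\<dots> \<le> ennreal (max bb C0) * emeasure lborel B"
      using bb_nonneg C0_pos t by (intro ennreal_convex_combination_le_max) auto
    finally show ?thesis .
  qed
  then show ?thesis using C0_pos unfolding bb_def by auto
qed

end
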